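(* Let $T>0$, $x_0\in\mathbb{R}$, $\gamma_P,\gamma_A>0$, and let $(W,a)\in\mathcal{C}$. Then the inequality $$\mathbb{E}\left[U_P\left(X_T^a-W\right)\right]\leq -\,\mathbb{E}\left[\left|U_P\left(X_T^a-\int_0^T\kappa(a_t)\,dt\right)\right|^{\frac{\gamma_A}{\gamma_A+\gamma_P}}\right]^{\frac{\gamma_A+\gamma_P}{\gamma_A}}\times\left(-\mathbb{E}\left[U_A\left(W-\int_0^T\kappa(a_t)\,dt\right)\right]\right)^{-\frac{\gamma_P}{\gamma_A}}$$ (which always holds) is an equality if and only if there exists a constant $\alpha>0$ such that $$\frac{U_P'\left(X_T^a-W\right)}{U_A'\left(W-\int_0^T\kappa(a_t)\,dt\right)}=\alpha,\quad \mathbb{P}\text{-a.s.}$$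
   Context: Fix $T>0$. Let $(\Omega,\mathcal{F},\mathbb{P})$ be a probability space carrying a standard one-dimensional Brownian motion $B=(B_t)_{t\in[0,T]}$, and let $\mathbb{F}=(\mathcal{F}_t)_{t\in[0,T]}$ be its natural completed filtration. Let $\mathbb{H}_2$ be the set of $\mathbb{F}$-predictable processes $a=(a_t)_{t\in[0,T]}$ with values in $[0,\infty)$ such that $\mathbb{E}[\exp(q\int_0^T|a_t|^2dt)]<\infty$ for all $q>0$. For $a\in\mathbb{H}_2$ and a fixed $x_0\in\mathbb{R}$, set $X_t^a=x_0+\int_0^t a_s\,ds+B_t$. Let $\mathcal{W}$ be the set of $\mathcal{F}_T$-measurable random variables $W$ with $\mathbb{E}[\exp(qW)]<\infty$ for all $q\in\mathbb{R}\setminus\{0\}$, and $\mathcal{C}=\{(W,a):W\in\mathcal{W},a\in\mathbb{H}_2\}$. The cost function $\kappa:[0,\infty)\to\mathbb{R}$ is strictly convex, continuous, non-decreasing, with invertible derivative $\kappa'$. With $\gamma_P,\gamma_A>0$, $U_P(x)=-\exp(-\gamma_P x)$ and $U_A(x)=-\exp(-\gamma_A x)$. *)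

theory Defs
  imports "HOL-Probability.Probability"
begin

definition strictly_convex_on :: "real set \<Rightarrow> (real \<Rightarrow> real) \<Rightarrow> bool" where
  "strictly_convex_on S f \<longleftrightarrow>
     (\<forall>x\<in>S. \<forall>y\<in>S. x \<noteq> y \<longrightarrow> (\<forall>u::real. 0 < u \<and> u < 1 \<longrightarrow>
        f (u * x + (1 - u) * y) < u * f x + (1 - u) * f y))"

definition brownian_motion :: "'a measure \<Rightarrow> real \<Rightarrow> (real \<Rightarrow> 'a \<Rightarrow> real) \<Rightarrow> bool" where
  "brownian_motion M T B \<longleftrightarrow>
     (\<forall>t\<in>{0..T}. B t \<in> borel_measurable M) \<and>
     (\<forall>\<omega>\<in>space M. B 0 \<omega> = 0) \<and>
     (\<forall>\<omega>\<in>space M. continuous_on {0..T} (\<lambda>t. B t \<omega>)) \<and>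
     (\<forall>s t. 0 \<le> s \<and> s < t \<and> t \<le> T \<longrightarrow>
        distributed M lborel (\<lambda>\<omega>. B t \<omega> - B s \<omega>) (normal_density 0 (sqrt (t - s)))) \<and>
     (\<forall>(n::nat) (ts::nat \<Rightarrow> real). 0 \<le> ts 0 \<and> (\<forall>i<n. ts i < ts (Suc i)) \<and> ts n \<le> T \<longrightarrow>
        prob_space.indep_vars M (\<lambda>_. borel) (\<lambda>i \<omega>. B (ts (Suc i)) \<omega> - B (ts i) \<omega>) {..<n})"

definition null_sets_P :: "'a measure \<Rightarrow> 'a set set" where
  "null_sets_P M = {N \<in> sets M. emeasure M N = 0}"

definition nat_filt :: "'a measure \<Rightarrow> (real \<Rightarrow> 'a \<Rightarrow> real) \<Rightarrow> real \<Rightarrow> 'a set set" where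
  "nat_filt M B t = sigma_sets (space M)
     ({B s -` U \<inter> space M | s U. 0 \<le> s \<and> s \<le> t \<and> U \<in> sets borel} \<union> null_sets_P M)"

definition predictable_sets :: "'a measure \<Rightarrow> (real \<Rightarrow> 'a \<Rightarrow> real) \<Rightarrow> real \<Rightarrow> (real \<times> 'a) set set" where
  "predictable_sets M B T = sigma_sets ({0..T} \<times> space M)
     ({{0} \<times> A | A. A \<in> nat_filt M B 0} \<union>
      {{s<..t} \<times> A | s t A. 0 \<le> s \<and> s < t \<and> t \<le> T \<and> A \<in> nat_filt M B s})"

definition predictable :: "'a measure \<Rightarrow> (real \<Rightarrow> 'a \<Rightarrow> real) \<Rightarrow> real \<Rightarrow> (real \<Rightarrow> 'a \<Rightarrow> real) \<Rightarrow> bool" where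
  "predictable M B T a \<longleftrightarrow>
     (\<lambda>(t, \<omega>). a t \<omega>) \<in> measurable (sigma ({0..T} \<times> space M) (predictable_sets M B T)) borel"

definition sq_int :: "real \<Rightarrow> (real \<Rightarrow> 'a \<Rightarrow> real) \<Rightarrow> 'a \<Rightarrow> ennreal" where
  "sq_int T a \<omega> = (\<integral>\<^sup>+ t \<in> {0..T}. ennreal ((a t \<omega>)\<^sup>2) \<partial>lborel)"

text \<open>The class H_2: predictable, [0,oo)-valued, E[exp(q int_0^T |a_t|^2 dt)] < oo for all q > 0
  (with exp(+oo) = +oo, i.e. the integral is a.s. finite).\<close>
definition H2 :: "'a measure \<Rightarrow> (real \<Rightarrow> 'a \<Rightarrow> real) \<Rightarrow> real \<Rightarrow> (real \<Rightarrow> 'a \<Rightarrow> real) \<Rightarrow> bool" where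
  "H2 M B T a \<longleftrightarrow> predictable M B T a \<and>
     (\<forall>t\<in>{0..T}. \<forall>\<omega>\<in>space M. 0 \<le> a t \<omega>) \<and>
     (\<forall>q::real. q > 0 \<longrightarrow>
        (AE \<omega> in M. sq_int T a \<omega> < \<infinity>) \<and>
        (\<integral>\<^sup>+ \<omega>. ennreal (exp (q * enn2real (sq_int T a \<omega>))) \<partial>M) < \<infinity>)"

definition Wset :: "'a measure \<Rightarrow> (real \<Rightarrow> 'a \<Rightarrow> real) \<Rightarrow> real \<Rightarrow> ('a \<Rightarrow> real) \<Rightarrow> bool" where
  "Wset M B T W \<longleftrightarrow>
     W \<in> measurable (sigma (space M) (nat_filt M B T)) borel \<and>
     (\<forall>q::real. q \<noteq> 0 \<longrightarrow> integrable M (\<lambda>\<omega>. exp (q * W \<omega>)))"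

definition XT :: "real \<Rightarrow> real \<Rightarrow> (real \<Rightarrow> 'a \<Rightarrow> real) \<Rightarrow> (real \<Rightarrow> 'a \<Rightarrow> real) \<Rightarrow> 'a \<Rightarrow> real" where
  "XT x0 T B a \<omega> = x0 + (LINT s:{0..T}|lborel. a s \<omega>) + B T \<omega>"

definition cost :: "(real \<Rightarrow> real) \<Rightarrow> real \<Rightarrow> (real \<Rightarrow> 'a \<Rightarrow> real) \<Rightarrow> 'a \<Rightarrow> real" where
  "cost \<kappa> T a \<omega> = (LINT t:{0..T}|lborel. \<kappa> (a t \<omega>))"

definition U :: "real \<Rightarrow> real \<Rightarrow> real" where
  "U \<gamma> x = - exp (- \<gamma> * x)"

end

theory Submission
  imports Defs
begin

(* Put F = -U_P(X_T - W), G = -U_A(W - C) and r = gamma_A / (gamma_A + gamma_P). Since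
   gamma_P r = gamma_A (1 - r), one has |U_P(X_T - C)|^r = F^r G^(1-r), so the inequality is Holder's
   inequality E[F^r G^(1-r)] <= E[F]^r E[G]^(1-r) solved for E[F]. Equality in Holder holds iff
   F/G is a.s. constant, and F/G is a positive multiple of the ratio of marginal utilities.
   E[F] is finite by the Gaussian exponential moments of B_T, those of W, and a >= 0. *)

section \<open>Holder's inequality and its equality case\<close>

lemma powr_mult_powr_less_convex_comb:
  fixes a b r :: real
  assumes r: "0 < r" "r < 1" and ab: "0 < a" "0 < b" "a \<noteq> b"
  shows "a powr r * b powr (1 - r) < r * a + (1 - r) * b"
proof -
  define g where "g = a powr r * b powr (1 - r)"
  have g: "0 < g" using ab unfolding g_def by simp
  have ln_g: "ln g = r * ln a + (1 - r) * ln b"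
    using ab unfolding g_def by (simp add: ln_mult ln_powr)
  \<comment> \<open>\<open>ln\<close> lies below its tangent at \<open>g\<close>, strictly away from \<open>g\<close>.\<close>
  have "0 = r * (ln a - ln g) + (1 - r) * (ln b - ln g)"
    using ln_g by (simp add: algebra_simps)
  also have "\<dots> < r * ((a - g) / g) + (1 - r) * ((b - g) / g)"
  proof (cases "a = g")
    case True
    then have "b \<noteq> g" using ab(3) by simp
    then show ?thesis
      using True mult_strict_left_mono[OF ln_diff_less[OF ab(2) g \<open>b \<noteq> g\<close>], of "1 - r"] r by simp
  next
    case False
    then show ?thesis
      using r ln_diff_less[OF ab(1) g] ln_diff_le[OF ab(2) g]
      by (intro add_less_le_mono mult_strict_left_mono mult_left_mono) auto
  qed
  also have "\<dots> = (r * a + (1 - r) * b - g) / g"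
    using g by (simp add: field_simps)
  finally show ?thesis
    using g unfolding g_def by (simp add: zero_less_divide_iff)
qed

lemma powr_mult_powr_eq_convex_comb_iff:
  fixes a b r :: real
  assumes "0 < r" "r < 1" "0 < a" "0 < b"
  shows "a powr r * b powr (1 - r) = r * a + (1 - r) * b \<longleftrightarrow> a = b"
proof
  show "a = b" if "a powr r * b powr (1 - r) = r * a + (1 - r) * b"
  proof (rule ccontr)
    assume "a \<noteq> b"
    then show False using powr_mult_powr_less_convex_comb[OF assms] that by simp
  qed
  show "a powr r * b powr (1 - r) = r * a + (1 - r) * b" if "a = b"
    using that assms(4) by (simp add: algebra_simps flip: powr_add)
qed

lemma (in prob_space) expectation_pos:
  fixes F :: "'a \<Rightarrow> real"
  assumes "integrable M F" and "\<And>\<omega>. \<omega> \<in> space M \<Longrightarrow> 0 < F \<omega>"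
  shows "0 < expectation F"
  using integral_less_AE_space[of "\<lambda>_. 0" F] assms by (simp add: AE_I2 emeasure_space_1)

lemma (in prob_space) AE_divide_eq_constD:
  fixes F G :: "'a \<Rightarrow> real"
  assumes F: "integrable M F" and G[measurable]: "G \<in> borel_measurable M"
    and pos: "\<And>\<omega>. \<omega> \<in> space M \<Longrightarrow> 0 < F \<omega> \<and> 0 < G \<omega>"
    and \<alpha>: "0 < \<alpha>" "AE \<omega> in M. F \<omega> / G \<omega> = \<alpha>"
  shows "integrable M G" and "\<alpha> = expectation F / expectation G"
proof -
  have [measurable]: "F \<in> borel_measurable M" using F by simp
  have G_eq: "AE \<omega> in M. G \<omega> = F \<omega> / \<alpha>"
    using \<alpha>(2) AE_space
  proof eventually_elim
    case (elim \<omega>)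
    then show ?case using pos[of \<omega>] \<alpha>(1) by (auto simp: field_simps)
  qed
  then show "integrable M G"
    using integrable_cong_AE[of G M "\<lambda>\<omega>. F \<omega> / \<alpha>"] F by simp
  have "expectation G = expectation F / \<alpha>"
    using integral_cong_AE[of G M "\<lambda>\<omega>. F \<omega> / \<alpha>", OF _ _ G_eq] by simp
  then show "\<alpha> = expectation F / expectation G"
    using expectation_pos[OF F] pos \<alpha>(1) by simp
qed

lemma ex_pos_AE_mult_eq_iff:
  fixes c :: real and f :: "'a \<Rightarrow> real"
  assumes "0 < c"
  shows "(\<exists>\<alpha>>0. AE \<omega> in M. c * f \<omega> = \<alpha>) \<longleftrightarrow> (\<exists>\<alpha>>0. AE \<omega> in M. f \<omega> = \<alpha>)"
proof
  assume "\<exists>\<alpha>>0. AE \<omega> in M. c * f \<omega> = \<alpha>"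
  then obtain \<alpha> where "0 < \<alpha>" and \<alpha>: "AE \<omega> in M. c * f \<omega> = \<alpha>" by blast
  from \<alpha> have "AE \<omega> in M. f \<omega> = \<alpha> / c"
    by eventually_elim (use assms in \<open>auto simp: field_simps\<close>)
  with \<open>0 < \<alpha>\<close> assms show "\<exists>\<alpha>>0. AE \<omega> in M. f \<omega> = \<alpha>"
    by (intro exI[of _ "\<alpha> / c"] conjI) simp_all
next
  assume "\<exists>\<alpha>>0. AE \<omega> in M. f \<omega> = \<alpha>"
  then obtain \<alpha> where "0 < \<alpha>" and \<alpha>: "AE \<omega> in M. f \<omega> = \<alpha>" by blast
  from \<alpha> have "AE \<omega> in M. c * f \<omega> = c * \<alpha>" by eventually_elim simp
  with \<open>0 < \<alpha>\<close> assms show "\<exists>\<alpha>>0. AE \<omega> in M. c * f \<omega> = \<alpha>"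
    by (intro exI[of _ "c * \<alpha>"] conjI) simp_all
qed

lemma (in prob_space) Holder_powr_mult_powr:
  fixes F G :: "'a \<Rightarrow> real" and r :: real
  assumes r: "0 < r" "r < 1"
    and [measurable]: "F \<in> borel_measurable M" "G \<in> borel_measurable M"
    and pos: "\<And>\<omega>. \<omega> \<in> space M \<Longrightarrow> 0 < F \<omega> \<and> 0 < G \<omega>"
    and F: "integrable M F" and G: "integrable M G"
  shows Holder_powr_mult_powr_le:
      "expectation (\<lambda>\<omega>. F \<omega> powr r * G \<omega> powr (1 - r))
         \<le> expectation F powr r * expectation G powr (1 - r)"
    and Holder_powr_mult_powr_eq_iff:
      "expectation (\<lambda>\<omega>. F \<omega> powr r * G \<omega> powr (1 - r))
         = expectation F powr r * expectation G powr (1 - r)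
       \<longleftrightarrow> (AE \<omega> in M. F \<omega> / G \<omega> = expectation F / expectation G)"
proof -
  define EF EG where "EF = expectation F" and "EG = expectation G"
  have EF: "0 < EF" and EG: "0 < EG"
    unfolding EF_def EG_def using pos by (auto intro!: expectation_pos F G)
  define K where "K = EF powr r * EG powr (1 - r)"
  define H where "H \<omega> = F \<omega> powr r * G \<omega> powr (1 - r)" for \<omega>
  define Y where "Y \<omega> = K * (r * (F \<omega> / EF) + (1 - r) * (G \<omega> / EG))" for \<omega>
  have H_eq: "H \<omega> = K * ((F \<omega> / EF) powr r * (G \<omega> / EG) powr (1 - r))" if "\<omega> \<in> space M" for \<omega>
    using pos[OF that] EF EG unfolding H_def K_def by (simp add: powr_divide)
  have K: "0 < K" unfolding K_def using EF EG by simp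
  \<comment> \<open>Pointwise weighted AM-GM for the normalised functions; integrating gives Holder.\<close>
  have H_le_Y: "H \<omega> \<le> Y \<omega>" if "\<omega> \<in> space M" for \<omega>
    unfolding H_eq[OF that] Y_def using Youngs_inequality_0[of r "1 - r" "F \<omega> / EF" "G \<omega> / EG"]
    using pos[OF that] EF EG K r by (simp add: mult_left_mono)
  have Y: "integrable M Y" and EY: "expectation Y = K"
    unfolding Y_def using F G EF EG by (simp_all add: EF_def EG_def field_simps)
  have [measurable]: "H \<in> borel_measurable M" unfolding H_def by measurable
  have H: "integrable M H"
    by (rule Bochner_Integration.integrable_bound[OF Y])
       (use H_le_Y in \<open>auto intro!: AE_I2 simp: H_def intro: order_trans[OF _ abs_ge_self]\<close>)
  show "expectation (\<lambda>\<omega>. F \<omega> powr r * G \<omega> powr (1 - r))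
          \<le> expectation F powr r * expectation G powr (1 - r)"
    using integral_mono[OF H Y H_le_Y] EY unfolding H_def K_def EF_def EG_def by simp
  have "expectation H = K \<longleftrightarrow> expectation (\<lambda>\<omega>. Y \<omega> - H \<omega>) = 0"
    using EY H Y by auto
  also have "\<dots> \<longleftrightarrow> (AE \<omega> in M. Y \<omega> - H \<omega> = 0)"
    using H Y H_le_Y by (intro integral_nonneg_eq_0_iff_AE) auto
  also have "\<dots> \<longleftrightarrow> (AE \<omega> in M. F \<omega> / G \<omega> = EF / EG)"
  proof (rule AE_cong)
    fix \<omega> assume \<omega>: "\<omega> \<in> space M"
    have "Y \<omega> - H \<omega> = 0 \<longleftrightarrow>
        (F \<omega> / EF) powr r * (G \<omega> / EG) powr (1 - r) = r * (F \<omega> / EF) + (1 - r) * (G \<omega> / EG)"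
      unfolding H_eq[OF \<omega>] Y_def using K by auto
    also have "\<dots> \<longleftrightarrow> F \<omega> / EF = G \<omega> / EG"
      using pos[OF \<omega>] EF EG by (intro powr_mult_powr_eq_convex_comb_iff[OF r]) auto
    also have "\<dots> \<longleftrightarrow> F \<omega> / G \<omega> = EF / EG"
      using pos[OF \<omega>] EF EG by (auto simp: field_simps)
    finally show "Y \<omega> - H \<omega> = 0 \<longleftrightarrow> F \<omega> / G \<omega> = EF / EG" .
  qed
  finally show "expectation (\<lambda>\<omega>. F \<omega> powr r * G \<omega> powr (1 - r))
          = expectation F powr r * expectation G powr (1 - r)
       \<longleftrightarrow> (AE \<omega> in M. F \<omega> / G \<omega> = expectation F / expectation G)"
    unfolding H_def K_def EF_def EG_def .
qed

lemma (in prob_space) reverse_Holder_powr_integrable: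
  fixes F G :: "'a \<Rightarrow> real" and r :: real
  assumes r: "0 < r" "r < 1"
    and [measurable]: "F \<in> borel_measurable M" "G \<in> borel_measurable M"
    and pos: "\<And>\<omega>. \<omega> \<in> space M \<Longrightarrow> 0 < F \<omega> \<and> 0 < G \<omega>"
    and F: "integrable M F" and G: "integrable M G"
  defines "EH \<equiv> expectation (\<lambda>\<omega>. F \<omega> powr r * G \<omega> powr (1 - r))"
  shows "EH powr (1 / r) * expectation G powr (- ((1 - r) / r)) \<le> expectation F
    \<and> (EH powr (1 / r) * expectation G powr (- ((1 - r) / r)) = expectation F
        \<longleftrightarrow> (\<exists>\<alpha>>0. AE \<omega> in M. F \<omega> / G \<omega> = \<alpha>))"
proof -
  define EF EG where "EF = expectation F" and "EG = expectation G"
  have EF: "0 < EF" and EG: "0 < EG"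
    unfolding EF_def EG_def using pos by (auto intro!: expectation_pos F G)
  have EH: "0 \<le> EH" unfolding EH_def by simp
  define K where "K = EF powr r * EG powr (1 - r)"
  have K_le: "EH \<le> K"
    unfolding EH_def K_def EF_def EG_def by (rule Holder_powr_mult_powr_le[OF r _ _ pos F G]) simp_all
  have K_eq_iff: "EH = K \<longleftrightarrow> (\<exists>\<alpha>>0. AE \<omega> in M. F \<omega> / G \<omega> = \<alpha>)"
  proof
    assume "EH = K"
    then have "AE \<omega> in M. F \<omega> / G \<omega> = EF / EG"
      using Holder_powr_mult_powr_eq_iff[OF r _ _ pos F G]
      unfolding EH_def K_def EF_def EG_def by simp
    with EF EG show "\<exists>\<alpha>>0. AE \<omega> in M. F \<omega> / G \<omega> = \<alpha>"
      by (intro exI[of _ "EF / EG"] conjI) simp_all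
  next
    assume "\<exists>\<alpha>>0. AE \<omega> in M. F \<omega> / G \<omega> = \<alpha>"
    then obtain \<alpha> where "0 < \<alpha>" and \<alpha>: "AE \<omega> in M. F \<omega> / G \<omega> = \<alpha>" by blast
    then have "\<alpha> = EF / EG"
      unfolding EF_def EG_def by (intro AE_divide_eq_constD(2)[OF F _ pos]) simp_all
    with \<alpha> show "EH = K"
      using Holder_powr_mult_powr_eq_iff[OF r _ _ pos F G]
      unfolding EH_def K_def EF_def EG_def by simp
  qed
  have K_powr: "K powr (1 / r) * EG powr (- ((1 - r) / r)) = EF"
    unfolding K_def using EF EG r by (simp add: powr_mult powr_powr flip: powr_add)
  have "EH powr (1 / r) * EG powr (- ((1 - r) / r)) \<le> EF
    \<and> (EH powr (1 / r) * EG powr (- ((1 - r) / r)) = EF \<longleftrightarrow> (\<exists>\<alpha>>0. AE \<omega> in M. F \<omega> / G \<omega> = \<alpha>))"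
  proof (cases "EH = K")
    case False
    then have "EH powr (1 / r) < K powr (1 / r)"
      using K_le EH r by (intro powr_less_mono2) auto
    then have "EH powr (1 / r) * EG powr (- ((1 - r) / r)) < EF"
      using EG by (simp flip: K_powr)
    then show ?thesis using False K_eq_iff by simp
  qed (use K_powr K_eq_iff in simp)
  then show ?thesis unfolding EF_def EG_def .
qed

lemma (in prob_space) reverse_Holder_powr:
  fixes F G :: "'a \<Rightarrow> real" and r :: real
  assumes r: "0 < r" "r < 1"
    and [measurable]: "F \<in> borel_measurable M" "G \<in> borel_measurable M"
    and pos: "\<And>\<omega>. \<omega> \<in> space M \<Longrightarrow> 0 < F \<omega> \<and> 0 < G \<omega>"
    and F: "integrable M F"
  shows "expectation (\<lambda>\<omega>. F \<omega> powr r * G \<omega> powr (1 - r)) powr (1 / r)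
           * expectation G powr (- ((1 - r) / r)) \<le> expectation F
    \<and> (expectation (\<lambda>\<omega>. F \<omega> powr r * G \<omega> powr (1 - r)) powr (1 / r)
           * expectation G powr (- ((1 - r) / r)) = expectation F
        \<longleftrightarrow> (\<exists>\<alpha>>0. AE \<omega> in M. F \<omega> / G \<omega> = \<alpha>))"
proof (cases "integrable M G")
  case False
  \<comment> \<open>The junk value \<open>expectation G = 0\<close> makes the left-hand side vanish, while \<open>F / G\<close> cannot
    be a.s. constant because \<open>F\<close> is integrable.\<close>
  then have "expectation G = 0" by (rule not_integrable_integral_eq)
  moreover have "\<not> (\<exists>\<alpha>>0. AE \<omega> in M. F \<omega> / G \<omega> = \<alpha>)"
    using AE_divide_eq_constD(1)[OF F _ pos] False by auto
  ultimately show ?thesis using expectation_pos[OF F] pos by simp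
qed (use reverse_Holder_powr_integrable[OF r _ _ pos F] in simp)

section \<open>Exponential utilities\<close>

lemma deriv_U: "deriv (U \<gamma>) x = \<gamma> * exp (- \<gamma> * x)"
  unfolding U_def by (rule DERIV_imp_deriv) (auto intro!: derivative_eq_intros)

lemma abs_U_powr_split:
  fixes \<gamma>P \<gamma>A x w c :: real
  assumes "0 < \<gamma>P" "0 < \<gamma>A"
  defines "r \<equiv> \<gamma>A / (\<gamma>A + \<gamma>P)"
  shows "\<bar>U \<gamma>P (x - c)\<bar> powr r = exp (- \<gamma>P * (x - w)) powr r * exp (- \<gamma>A * (w - c)) powr (1 - r)"
proof -
  have s: "\<gamma>A + \<gamma>P \<noteq> 0" using assms by simp
  then have "1 - r = \<gamma>P / (\<gamma>A + \<gamma>P)" unfolding r_def by (simp add: field_simps)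
  then have "- \<gamma>P * (x - c) * r = - \<gamma>P * (x - w) * r + - \<gamma>A * (w - c) * (1 - r)"
    using s unfolding r_def by (simp add: divide_simps) (simp add: algebra_simps)
  then show ?thesis by (simp add: U_def exp_powr_real flip: exp_add)
qed

lemma (in prob_space) expected_U_reverse_Holder:
  fixes X W C :: "'a \<Rightarrow> real" and \<gamma>P \<gamma>A :: real
  assumes \<gamma>: "0 < \<gamma>P" "0 < \<gamma>A"
    and [measurable]: "X \<in> borel_measurable M" "W \<in> borel_measurable M" "C \<in> borel_measurable M"
    and integrable: "integrable M (\<lambda>\<omega>. exp (- \<gamma>P * (X \<omega> - W \<omega>)))"
  shows "(\<integral>\<omega>. U \<gamma>P (X \<omega> - W \<omega>) \<partial>M)
           \<le> - ((\<integral>\<omega>. \<bar>U \<gamma>P (X \<omega> - C \<omega>)\<bar> powr (\<gamma>A / (\<gamma>A + \<gamma>P)) \<partial>M)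
                   powr ((\<gamma>A + \<gamma>P) / \<gamma>A))
             * (- (\<integral>\<omega>. U \<gamma>A (W \<omega> - C \<omega>) \<partial>M)) powr (- \<gamma>P / \<gamma>A)
       \<and> ((\<integral>\<omega>. U \<gamma>P (X \<omega> - W \<omega>) \<partial>M)
           = - ((\<integral>\<omega>. \<bar>U \<gamma>P (X \<omega> - C \<omega>)\<bar> powr (\<gamma>A / (\<gamma>A + \<gamma>P)) \<partial>M)
                   powr ((\<gamma>A + \<gamma>P) / \<gamma>A))
             * (- (\<integral>\<omega>. U \<gamma>A (W \<omega> - C \<omega>) \<partial>M)) powr (- \<gamma>P / \<gamma>A)
          \<longleftrightarrow> (\<exists>\<alpha>>0. AE \<omega> in M.
                 deriv (U \<gamma>P) (X \<omega> - W \<omega>) / deriv (U \<gamma>A) (W \<omega> - C \<omega>) = \<alpha>))"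
proof -
  define r where "r = \<gamma>A / (\<gamma>A + \<gamma>P)"
  define F where "F \<omega> = exp (- \<gamma>P * (X \<omega> - W \<omega>))" for \<omega>
  define G where "G \<omega> = exp (- \<gamma>A * (W \<omega> - C \<omega>))" for \<omega>
  have r: "0 < r" "r < 1" unfolding r_def using \<gamma> by auto
  have "1 - r = \<gamma>P / (\<gamma>A + \<gamma>P)" unfolding r_def using \<gamma> by (simp add: field_simps)
  then have exponents: "(\<gamma>A + \<gamma>P) / \<gamma>A = 1 / r" "- \<gamma>P / \<gamma>A = - ((1 - r) / r)"
    unfolding r_def using \<gamma> by simp_all
  have [measurable]: "F \<in> borel_measurable M" "G \<in> borel_measurable M"
    unfolding F_def G_def by measurable
  have pos: "0 < F \<omega> \<and> 0 < G \<omega>" for \<omega>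
    unfolding F_def G_def by simp
  have F: "integrable M F" unfolding F_def by (rule integrable)
  have E_U_P: "(\<integral>\<omega>. U \<gamma>P (X \<omega> - W \<omega>) \<partial>M) = - expectation F"
    unfolding U_def F_def by simp
  have E_abs_U_P: "(\<integral>\<omega>. \<bar>U \<gamma>P (X \<omega> - C \<omega>)\<bar> powr (\<gamma>A / (\<gamma>A + \<gamma>P)) \<partial>M)
      = expectation (\<lambda>\<omega>. F \<omega> powr r * G \<omega> powr (1 - r))"
    unfolding F_def G_def r_def using abs_U_powr_split[OF \<gamma>] by simp
  have E_U_A: "- (\<integral>\<omega>. U \<gamma>A (W \<omega> - C \<omega>) \<partial>M) = expectation G"
    unfolding U_def G_def by simp
  have "deriv (U \<gamma>P) (X \<omega> - W \<omega>) / deriv (U \<gamma>A) (W \<omega> - C \<omega>) = \<gamma>P / \<gamma>A * (F \<omega> / G \<omega>)" for \<omega>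
    unfolding deriv_U F_def G_def by simp
  then have ratio: "(\<exists>\<alpha>>0. AE \<omega> in M. deriv (U \<gamma>P) (X \<omega> - W \<omega>) / deriv (U \<gamma>A) (W \<omega> - C \<omega>) = \<alpha>)
      \<longleftrightarrow> (\<exists>\<alpha>>0. AE \<omega> in M. F \<omega> / G \<omega> = \<alpha>)"
    using ex_pos_AE_mult_eq_iff[where c="\<gamma>P / \<gamma>A" and M=M and f="\<lambda>\<omega>. F \<omega> / G \<omega>"] \<gamma> by simp
  show ?thesis
    unfolding E_U_P E_abs_U_P E_U_A exponents ratio mult_minus_left neg_le_iff_le neg_equal_iff_equal
    using reverse_Holder_powr[OF r _ _ pos F] by (simp add: eq_commute[of "expectation F"])
qed

section \<open>The controlled state and the cost\<close>

lemma nat_filt_subset_sets: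
  assumes "brownian_motion M T B" "0 \<le> s" "s \<le> T"
  shows "nat_filt M B s \<subseteq> sets M"
  unfolding nat_filt_def
proof (rule sets.sigma_sets_subset)
  have "B u \<in> borel_measurable M" if "0 \<le> u" "u \<le> s" for u
    using assms that unfolding brownian_motion_def by auto
  then show "{B u -` U \<inter> space M |u U. 0 \<le> u \<and> u \<le> s \<and> U \<in> sets borel} \<union> null_sets_P M \<subseteq> sets M"
    unfolding null_sets_P_def by (auto intro: measurable_sets)
qed

lemma predictable_borel_measurable_pair:
  assumes bm: "brownian_motion M T B" and T: "0 \<le> T" and a: "predictable M B T a"
  shows "(\<lambda>(t, \<omega>). a t \<omega>) \<in> borel_measurable (restrict_space lborel {0..T} \<Otimes>\<^sub>M M)"
proof -
  define N where "N = restrict_space lborel {0..T} \<Otimes>\<^sub>M M"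
  have space_N: "space N = {0..T} \<times> space M"
    unfolding N_def by (simp add: space_pair_measure space_restrict_space)
  have interval: "I \<in> sets (restrict_space lborel {0..T})" if "I \<subseteq> {0..T}" "I \<in> sets borel" for I
    using that by (auto simp: sets_restrict_space intro!: image_eqI[of _ _ I])
  have generators: "{{0} \<times> A | A. A \<in> nat_filt M B 0} \<union>
      {{s<..t} \<times> A | s t A. 0 \<le> s \<and> s < t \<and> t \<le> T \<and> A \<in> nat_filt M B s} \<subseteq> sets N"
    using nat_filt_subset_sets[OF bm] T unfolding N_def by (fastforce intro!: interval)
  have sub: "predictable_sets M B T \<subseteq> sets N"
    unfolding predictable_sets_def space_N[symmetric]
    by (rule sets.sigma_sets_subset[OF generators[unfolded space_N[symmetric]]])
  then have pow: "predictable_sets M B T \<subseteq> Pow ({0..T} \<times> space M)"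
    using sets.sets_into_space[of _ N] space_N by auto
  have "measurable (sigma ({0..T} \<times> space M) (predictable_sets M B T)) borel \<subseteq> measurable N borel"
    using pow sub space_N sets.sigma_sets_subset[OF sub]
    by (intro measurable_mono) (simp_all add: sets_measure_of)
  then show ?thesis using a unfolding predictable_def N_def by auto
qed

lemma borel_measurable_set_integral_lborel:
  fixes f :: "real \<Rightarrow> 'a \<Rightarrow> real"
  assumes "sigma_finite_measure M" and S: "S \<in> sets borel"
    and f: "(\<lambda>(t, \<omega>). f t \<omega>) \<in> borel_measurable (restrict_space lborel S \<Otimes>\<^sub>M M)"
  shows "(\<lambda>\<omega>. LINT t:S|lborel. f t \<omega>) \<in> borel_measurable M"
proof -
  interpret S: sigma_finite_measure "restrict_space lborel S"
    by (rule sigma_finite_measure_restrict_space[OF sigma_finite_lborel]) (use S in simp)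
  have "(\<lambda>(\<omega>, t). f t \<omega>) \<in> borel_measurable (M \<Otimes>\<^sub>M restrict_space lborel S)"
    using f measurable_pair_swap_iff[of "\<lambda>(t, \<omega>). f t \<omega>" "restrict_space lborel S" M borel]
    by (simp add: case_prod_beta')
  then have "(\<lambda>\<omega>. \<integral>t. f t \<omega> \<partial>restrict_space lborel S) \<in> borel_measurable M"
    by (rule S.borel_measurable_lebesgue_integral)
  then show ?thesis
    unfolding set_lebesgue_integral_def using S
    by (subst (asm) Bochner_Integration.integral_restrict_space) simp_all
qed

lemma integrable_normal_density_mult_exp:
  fixes \<mu> \<sigma> c :: real
  assumes "0 < \<sigma>"
  shows "integrable lborel (\<lambda>x. normal_density \<mu> \<sigma> x * exp (c * x))"
proof -
  have "normal_density \<mu> \<sigma> x * exp (c * x)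
      = exp (c * \<mu> + c\<^sup>2 * \<sigma>\<^sup>2 / 2) * normal_density (\<mu> + c * \<sigma>\<^sup>2) \<sigma> x" for x
  proof -
    have "- (x - \<mu>)\<^sup>2 / (2 * \<sigma>\<^sup>2) + c * x = c * \<mu> + c\<^sup>2 * \<sigma>\<^sup>2 / 2 + - (x - (\<mu> + c * \<sigma>\<^sup>2))\<^sup>2 / (2 * \<sigma>\<^sup>2)"
      using assms by (simp add: field_simps power2_eq_square)
    then show ?thesis
      unfolding normal_density_def by (simp add: exp_add[symmetric] mult.assoc)
  qed
  moreover have "integrable lborel (\<lambda>x. exp (c * \<mu> + c\<^sup>2 * \<sigma>\<^sup>2 / 2) * normal_density (\<mu> + c * \<sigma>\<^sup>2) \<sigma> x)"
    using assms by (intro integrable_mult_right) simp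
  ultimately show ?thesis by simp
qed

lemma brownian_motion_integrable_exp:
  assumes bm: "brownian_motion M T B" and t: "0 < t" "t \<le> T"
  shows "integrable M (\<lambda>\<omega>. exp (c * B t \<omega>))"
proof -
  have "\<forall>s t. 0 \<le> s \<and> s < t \<and> t \<le> T \<longrightarrow>
      distributed M lborel (\<lambda>\<omega>. B t \<omega> - B s \<omega>) (normal_density 0 (sqrt (t - s)))"
    using bm unfolding brownian_motion_def by blast
  then have "distributed M lborel (\<lambda>\<omega>. B t \<omega> - B 0 \<omega>) (normal_density 0 (sqrt t))"
    using t by fastforce
  then have "integrable M (\<lambda>\<omega>. exp (c * (B t \<omega> - B 0 \<omega>)))"
    using distributed_integrable[of M lborel _ _ "\<lambda>x. exp (c * x)"]
      integrable_normal_density_mult_exp[of "sqrt t" 0 c] t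
    by (simp add: normal_density_nonneg)
  moreover have "\<omega> \<in> space M \<Longrightarrow> B 0 \<omega> = 0" for \<omega>
    using bm unfolding brownian_motion_def by auto
  ultimately show ?thesis
    using Bochner_Integration.integrable_cong[of M M "\<lambda>\<omega>. exp (c * (B t \<omega> - B 0 \<omega>))"] by simp
qed

lemma Wset_borel_measurable:
  assumes "Wset M B T W"
  shows "W \<in> borel_measurable M"
proof -
  have "\<forall>q. q \<noteq> 0 \<longrightarrow> integrable M (\<lambda>\<omega>. exp (q * W \<omega>))"
    using assms unfolding Wset_def by blast
  from this[rule_format, of 1] have "integrable M (\<lambda>\<omega>. exp (W \<omega>))" by simp
  then have "(\<lambda>\<omega>. ln (exp (W \<omega>))) \<in> borel_measurable M"
    using borel_measurable_integrable by measurable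
  then show ?thesis by simp
qed

lemma XT_borel_measurable:
  assumes "sigma_finite_measure M" "brownian_motion M T B" "0 \<le> T" "predictable M B T a"
  shows "XT x0 T B a \<in> borel_measurable M"
proof -
  have [measurable]: "B T \<in> borel_measurable M"
    using assms(2,3) unfolding brownian_motion_def by auto
  have [measurable]: "(\<lambda>\<omega>. LINT t:{0..T}|lborel. a t \<omega>) \<in> borel_measurable M"
    using predictable_borel_measurable_pair[OF assms(2-4)]
    by (intro borel_measurable_set_integral_lborel[OF assms(1)]) simp_all
  show ?thesis unfolding XT_def[abs_def] by measurable
qed

lemma cost_borel_measurable:
  assumes "sigma_finite_measure M" "brownian_motion M T B" "0 \<le> T" "predictable M B T a"
    and nonneg: "\<forall>t\<in>{0..T}. \<forall>\<omega>\<in>space M. 0 \<le> a t \<omega>"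
    and "continuous_on {0..} \<kappa>"
  shows "cost \<kappa> T a \<in> borel_measurable M"
proof -
  let ?N = "restrict_space lborel {0..T} \<Otimes>\<^sub>M M"
  \<comment> \<open>\<open>\<kappa>\<close> is only continuous on \<open>[0, \<infinity>)\<close>, where \<open>a\<close> takes its values.\<close>
  have "continuous_on UNIV (\<lambda>x. \<kappa> (max 0 x))"
    by (rule continuous_on_compose2[OF assms(6)]) (auto intro!: continuous_intros)
  then have "(\<lambda>(t, \<omega>). \<kappa> (max 0 (a t \<omega>))) \<in> borel_measurable ?N"
    using borel_measurable_continuous_on[OF _ predictable_borel_measurable_pair[OF assms(2-4)]]
    by (simp add: case_prod_beta')
  moreover have "\<kappa> (max 0 (a t \<omega>)) = \<kappa> (a t \<omega>)" if "(t, \<omega>) \<in> space ?N" for t \<omega>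
    using nonneg that by (simp add: space_pair_measure space_restrict_space max_def)
  ultimately have "(\<lambda>(t, \<omega>). \<kappa> (a t \<omega>)) \<in> borel_measurable ?N"
    by (subst measurable_cong[where g="\<lambda>(t, \<omega>). \<kappa> (max 0 (a t \<omega>))"]) auto
  then show ?thesis
    unfolding cost_def[abs_def]
    by (intro borel_measurable_set_integral_lborel[OF assms(1)]) simp_all
qed

lemma exp_add_le_mean_exp_double:
  fixes u v :: real
  shows "exp (u + v) \<le> (exp (2 * u) + exp (2 * v)) / 2"
proof -
  have "0 \<le> (exp u - exp v)\<^sup>2" by simp
  then show ?thesis
    by (simp add: power2_eq_square algebra_simps flip: exp_add)
qed

lemma integrable_exp_neg_XT_diff:
  assumes bm: "brownian_motion M T B" and T: "0 < T" and \<gamma>: "0 < \<gamma>"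
    and nonneg: "\<forall>t\<in>{0..T}. \<forall>\<omega>\<in>space M. 0 \<le> a t \<omega>"
    and [measurable]: "XT x0 T B a \<in> borel_measurable M" "W \<in> borel_measurable M"
    and W: "integrable M (\<lambda>\<omega>. exp (2 * \<gamma> * W \<omega>))"
  shows "integrable M (\<lambda>\<omega>. exp (- \<gamma> * (XT x0 T B a \<omega> - W \<omega>)))"
proof (rule Bochner_Integration.integrable_bound)
  define bound where "bound \<omega> =
    exp (- \<gamma> * x0) * ((exp (2 * (- \<gamma> * B T \<omega>)) + exp (2 * (\<gamma> * W \<omega>))) / 2)" for \<omega>
  show "integrable M bound"
    using brownian_motion_integrable_exp[OF bm T order_refl, of "- 2 * \<gamma>"] W
    unfolding bound_def by (simp add: mult.assoc)
  show "AE \<omega> in M. norm (exp (- \<gamma> * (XT x0 T B a \<omega> - W \<omega>))) \<le> norm (bound \<omega>)"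
  proof (rule AE_I2)
    fix \<omega> assume \<omega>: "\<omega> \<in> space M"
    define I where "I = (LINT t:{0..T}|lborel. a t \<omega>)"
    have "0 \<le> I"
      unfolding I_def set_lebesgue_integral_def
      using nonneg \<omega> by (intro Bochner_Integration.integral_nonneg) (auto simp: indicator_def)
    have "exp (- \<gamma> * (XT x0 T B a \<omega> - W \<omega>))
        = exp (- \<gamma> * x0) * exp (- \<gamma> * I) * exp (- \<gamma> * B T \<omega> + \<gamma> * W \<omega>)"
      unfolding XT_def I_def by (simp add: algebra_simps flip: exp_add)
    also have "\<dots> \<le> exp (- \<gamma> * x0) * 1 * ((exp (2 * (- \<gamma> * B T \<omega>)) + exp (2 * (\<gamma> * W \<omega>))) / 2)"
      using \<open>0 \<le> I\<close> \<gamma> by (intro mult_mono exp_add_le_mean_exp_double) auto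
    finally show "norm (exp (- \<gamma> * (XT x0 T B a \<omega> - W \<omega>))) \<le> norm (bound \<omega>)"
      unfolding bound_def by simp
  qed
qed simp

theorem theorem3p3:
  fixes M :: "'a measure" and B :: "real \<Rightarrow> 'a \<Rightarrow> real" and T x0 \<gamma>P \<gamma>A :: real
    and \<kappa> \<kappa>' :: "real \<Rightarrow> real" and W :: "'a \<Rightarrow> real" and a :: "real \<Rightarrow> 'a \<Rightarrow> real"
  assumes "prob_space M"
    and "T > 0"
    and "brownian_motion M T B"
    and "\<gamma>P > 0" and "\<gamma>A > 0"
    and "strictly_convex_on {0..} \<kappa>"
    and "continuous_on {0..} \<kappa>"
    and "mono_on {0..} \<kappa>"
    and "\<And>x. x \<ge> 0 \<Longrightarrow> (\<kappa> has_real_derivative \<kappa>' x) (at x within {0..})"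
    and "inj_on \<kappa>' {0..}"
    and "Wset M B T W"
    and "H2 M B T a"
  shows "(\<integral>\<omega>. U \<gamma>P (XT x0 T B a \<omega> - W \<omega>) \<partial>M)
           \<le> - ((\<integral>\<omega>. \<bar>U \<gamma>P (XT x0 T B a \<omega> - cost \<kappa> T a \<omega>)\<bar> powr (\<gamma>A / (\<gamma>A + \<gamma>P)) \<partial>M)
                   powr ((\<gamma>A + \<gamma>P) / \<gamma>A))
             * (- (\<integral>\<omega>. U \<gamma>A (W \<omega> - cost \<kappa> T a \<omega>) \<partial>M)) powr (- \<gamma>P / \<gamma>A)
       \<and> ((\<integral>\<omega>. U \<gamma>P (XT x0 T B a \<omega> - W \<omega>) \<partial>M)
           = - ((\<integral>\<omega>. \<bar>U \<gamma>P (XT x0 T B a \<omega> - cost \<kappa> T a \<omega>)\<bar> powr (\<gamma>A / (\<gamma>A + \<gamma>P)) \<partial>M)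
                   powr ((\<gamma>A + \<gamma>P) / \<gamma>A))
             * (- (\<integral>\<omega>. U \<gamma>A (W \<omega> - cost \<kappa> T a \<omega>) \<partial>M)) powr (- \<gamma>P / \<gamma>A)
          \<longleftrightarrow> (\<exists>\<alpha>>0. AE \<omega> in M.
                 deriv (U \<gamma>P) (XT x0 T B a \<omega> - W \<omega>) / deriv (U \<gamma>A) (W \<omega> - cost \<kappa> T a \<omega>) = \<alpha>))"
proof -
  interpret prob_space M by fact
  have T: "0 \<le> T" using \<open>T > 0\<close> by simp
  have a: "predictable M B T a" "\<forall>t\<in>{0..T}. \<forall>\<omega>\<in>space M. 0 \<le> a t \<omega>"
    using \<open>H2 M B T a\<close> unfolding H2_def by blast+
  have W: "W \<in> borel_measurable M" "integrable M (\<lambda>\<omega>. exp (2 * \<gamma>P * W \<omega>))"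
    using \<open>Wset M B T W\<close> \<open>\<gamma>P > 0\<close> Wset_borel_measurable unfolding Wset_def by auto
  have X: "XT x0 T B a \<in> borel_measurable M"
    by (rule XT_borel_measurable[OF prob_space_imp_sigma_finite[OF \<open>prob_space M\<close>] \<open>brownian_motion M T B\<close> T a(1)])
  have C: "cost \<kappa> T a \<in> borel_measurable M"
    using prob_space_imp_sigma_finite[OF \<open>prob_space M\<close>] \<open>brownian_motion M T B\<close> T a
      \<open>continuous_on {0..} \<kappa>\<close>
    by (rule cost_borel_measurable)
  show ?thesis
    using expected_U_reverse_Holder[OF \<open>\<gamma>P > 0\<close> \<open>\<gamma>A > 0\<close> X W(1) C
        integrable_exp_neg_XT_diff[OF \<open>brownian_motion M T B\<close> \<open>T > 0\<close> \<open>\<gamma>P > 0\<close> a(2) X W]] .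
qed

end
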